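(* Let $l,t,s,n$ be integers with $t\geq l$, $s\geq l+1\geq 3$ and $n\geq 2\binom{3s}{2}$. Then for every integer $x$ with $1\leq x\leq l-1$, $$ex(n,\{K_{l,t},M_{s+1}\},l-1)\geq ex(n,\{K_{l,t},M_{s+1}\},x).$$
   Context: All graphs are finite and simple. $K_{l,t}$ is the complete bipartite graph with parts of sizes $l,t$; $M_{s+1}$ is the matching of $s+1$ disjoint edges; a graph is $\{K_{l,t},M_{s+1}\}$-free if it contains neither as a subgraph. For a graph $G$ with matching number at most $s$, say $X\subseteq V(G)$ is admissible if $|X|+\sum_{i=1}^m\lfloor |V(C_i)|/2\rfloor\leq s$, where $C_1,\dots,C_m$ are the components of $G-X$ (such $X$ exists by the Tutte–Berge formula); let $x(G)$ be the maximum size of an admissible set. Let $\mathscr{G}_x$ be the set of $\{K_{l,t},M_{s+1}\}$-free graphs $G$ on $n$ vertices with $x(G)=x$, and $ex(n,\{K_{l,t},M_{s+1}\},x)=\max_{G\in\mathscr{G}_x}e(G)$. *)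

theory Defs
  imports Main
begin

definition is_graph :: "nat \<Rightarrow> nat set set \<Rightarrow> bool" where
  "is_graph n G \<longleftrightarrow> (\<forall>e\<in>G. e \<subseteq> {0..<n} \<and> card e = 2)"

definition num_edges :: "nat set set \<Rightarrow> nat" where
  "num_edges G = card G"

definition contains_Klt :: "nat \<Rightarrow> nat \<Rightarrow> nat \<Rightarrow> nat set set \<Rightarrow> bool" where
  "contains_Klt n l t G \<longleftrightarrow>
     (\<exists>A B. A \<subseteq> {0..<n} \<and> B \<subseteq> {0..<n} \<and> A \<inter> B = {} \<and>
            card A = l \<and> card B = t \<and> (\<forall>a\<in>A. \<forall>b\<in>B. {a, b} \<in> G))"

definition contains_matching :: "nat \<Rightarrow> nat set set \<Rightarrow> bool" where
  "contains_matching k G \<longleftrightarrow>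
     (\<exists>M. M \<subseteq> G \<and> card M = k \<and> (\<forall>e\<in>M. \<forall>f\<in>M. e \<noteq> f \<longrightarrow> e \<inter> f = {}))"

definition del_rel :: "nat \<Rightarrow> nat set set \<Rightarrow> nat set \<Rightarrow> (nat \<times> nat) set" where
  "del_rel n G X = {(u, v). u \<in> {0..<n} - X \<and> v \<in> {0..<n} - X \<and> {u, v} \<in> G}"

definition components :: "nat \<Rightarrow> nat set set \<Rightarrow> nat set \<Rightarrow> nat set set" where
  "components n G X =
     {{w \<in> {0..<n} - X. (v, w) \<in> (del_rel n G X)\<^sup>*} | v. v \<in> {0..<n} - X}"

definition admissible :: "nat \<Rightarrow> nat \<Rightarrow> nat set set \<Rightarrow> nat set \<Rightarrow> bool" where
  "admissible n s G X \<longleftrightarrow> X \<subseteq> {0..<n} \<and>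
     card X + (\<Sum>C\<in>components n G X. card C div 2) \<le> s"

definition xG :: "nat \<Rightarrow> nat \<Rightarrow> nat set set \<Rightarrow> nat" where
  "xG n s G = Max {card X | X. admissible n s G X}"

definition GG :: "nat \<Rightarrow> nat \<Rightarrow> nat \<Rightarrow> nat \<Rightarrow> nat \<Rightarrow> nat set set set" where
  "GG n l t s x = {G. is_graph n G \<and> \<not> contains_Klt n l t G \<and>
                     \<not> contains_matching (Suc s) G \<and> xG n s G = x}"

text \<open>ex(n,{K_{l,t},M_{s+1}},x): maximum number of edges over \<G>_x
  (Sup on nat; equals 0 if the family is empty).\<close>
definition ex_x :: "nat \<Rightarrow> nat \<Rightarrow> nat \<Rightarrow> nat \<Rightarrow> nat \<Rightarrow> nat" where
  "ex_x n l t s x = Sup (num_edges ` GG n l t s x)"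

end

theory Submission
  imports Defs
begin

text \<open>Write p = l - 1 and k = s - p. A graph G with x(G) = x has an admissible set X of
  size x. At most x n edges meet X, and every edge of G - X lies in a component with at least
  two vertices; these components have at most 3 s vertices altogether, so
  e(G) \<le> x n + C(3s, 2). That admissible sets exist at all is the hard direction of the
  Tutte--Berge formula, proved below via Gallai's lemma.

  Conversely, join p vertices completely to the n - p - 3k vertices outside k disjoint
  triangles. Every other vertex has degree at most p < t, so the graph is K_{l,t}-free; its
  matching number is p + k = s and x = p = l - 1; and its p (n - p - 3k) edges exceed
  x n + C(3s, 2) whenever x < p and n \<ge> 2 C(3s, 2).\<close>

section \<open>Components and matchings on a vertex set\<close>

definition adjacency_on :: "'a set \<Rightarrow> 'a set set \<Rightarrow> ('a \<times> 'a) set" where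
  "adjacency_on W G = {(u, v). u \<in> W \<and> v \<in> W \<and> {u, v} \<in> G}"

definition component_of :: "'a set \<Rightarrow> 'a set set \<Rightarrow> 'a \<Rightarrow> 'a set" where
  "component_of W G v = {w \<in> W. (v, w) \<in> (adjacency_on W G)\<^sup>*}"

definition components_on :: "'a set \<Rightarrow> 'a set set \<Rightarrow> 'a set set" where
  "components_on W G = component_of W G ` W"

definition matching_on :: "'a set \<Rightarrow> 'a set set \<Rightarrow> 'a set set \<Rightarrow> bool" where
  "matching_on W G M \<longleftrightarrow> M \<subseteq> G \<and> (\<forall>e\<in>M. e \<subseteq> W) \<and> pairwise disjnt M"

definition maximum_matching_on :: "'a set \<Rightarrow> 'a set set \<Rightarrow> 'a set set \<Rightarrow> bool" where
  "maximum_matching_on W G M \<longleftrightarrow>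
     matching_on W G M \<and> (\<forall>M'. matching_on W G M' \<longrightarrow> card M' \<le> card M)"

lemma components_eq_components_on: "components n G X = components_on ({0..<n} - X) G"
  unfolding components_def components_on_def component_of_def del_rel_def adjacency_on_def
  by auto

lemma sym_adjacency_on: "sym (adjacency_on W G)"
  unfolding adjacency_on_def sym_def by (auto simp: insert_commute)

lemma mem_component_of_self: "v \<in> W \<Longrightarrow> v \<in> component_of W G v"
  unfolding component_of_def by auto

lemma component_of_eq:
  assumes "w \<in> component_of W G v"
  shows "component_of W G w = component_of W G v"
proof -
  have vw: "(v, w) \<in> (adjacency_on W G)\<^sup>*"
    using assms by (simp add: component_of_def)
  moreover have wv: "(w, v) \<in> (adjacency_on W G)\<^sup>*"
    using sym_rtrancl[OF sym_adjacency_on] vw by (rule symD)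
  ultimately have "(w, x) \<in> (adjacency_on W G)\<^sup>* \<longleftrightarrow> (v, x) \<in> (adjacency_on W G)\<^sup>*" for x
    by (metis rtrancl_trans)
  then show ?thesis
    by (simp add: component_of_def)
qed

lemma component_of_in_components_on: "v \<in> W \<Longrightarrow> component_of W G v \<in> components_on W G"
  unfolding components_on_def by simp

lemma components_on_subset: "C \<in> components_on W G \<Longrightarrow> C \<subseteq> W"
  unfolding components_on_def component_of_def by auto

lemma finite_components_on: "finite W \<Longrightarrow> finite (components_on W G)"
  unfolding components_on_def by simp

lemma components_on_eq_component_of:
  "C \<in> components_on W G \<Longrightarrow> v \<in> C \<Longrightarrow> C = component_of W G v"
  unfolding components_on_def using component_of_eq by (metis imageE)

lemma components_on_disjoint:
  "C \<in> components_on W G \<Longrightarrow> C' \<in> components_on W G \<Longrightarrow> v \<in> C \<Longrightarrow> v \<in> C' \<Longrightarrow> C = C'"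
  using components_on_eq_component_of by metis

lemma components_on_connected:
  assumes "C \<in> components_on W G" "u \<in> C" "v \<in> C"
  shows "(u, v) \<in> (adjacency_on W G)\<^sup>*"
  using components_on_eq_component_of[OF assms(1,2)] assms(3) by (simp add: component_of_def)

lemma edge_subset_component:
  assumes "{u, v} \<in> G" "u \<in> W" "v \<in> W"
  obtains C where "C \<in> components_on W G" "{u, v} \<subseteq> C"
proof
  show "component_of W G u \<in> components_on W G"
    using assms(2) by (rule component_of_in_components_on)
  have "(u, v) \<in> adjacency_on W G"
    using assms by (simp add: adjacency_on_def)
  then show "{u, v} \<subseteq> component_of W G u"
    using assms(2,3) by (auto simp: component_of_def)
qed

lemma matching_on_subset: "matching_on W G M \<Longrightarrow> N \<subseteq> M \<Longrightarrow> matching_on W G N"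
  unfolding matching_on_def by (meson pairwise_subset subset_iff)

lemma matching_on_mono:
  "matching_on W G M \<Longrightarrow> W \<subseteq> W' \<Longrightarrow> G \<subseteq> G' \<Longrightarrow> matching_on W' G' M"
  unfolding matching_on_def by blast

lemma matching_on_insert:
  assumes "matching_on W G M" "e \<in> G" "e \<subseteq> W" "e \<inter> \<Union>M = {}"
  shows "matching_on W G (insert e M)"
proof -
  have "disjnt e f \<and> disjnt f e" if "f \<in> M" for f
    using assms(4) that by (auto simp: disjnt_def)
  then show ?thesis
    using assms(1-3) by (simp add: matching_on_def pairwise_insert)
qed

lemma matching_on_exchange:
  assumes "matching_on W G N" "f \<in> N" "e \<in> G" "e \<subseteq> W" "e \<inter> \<Union>N \<subseteq> f"
  shows "matching_on W G (insert e (N - {f}))"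
proof (rule matching_on_insert)
  show "matching_on W G (N - {f})"
    using assms(1) by (rule matching_on_subset) blast
  have "disjnt f g" if "g \<in> N - {f}" for g
    using assms(1,2) that by (auto simp: matching_on_def pairwise_def)
  then show "e \<inter> \<Union>(N - {f}) = {}"
    using assms(5) by (auto simp: disjnt_def)
qed (use assms in auto)

lemma matching_on_Un:
  assumes "matching_on W G M" "matching_on W G N" "\<Union>M \<inter> \<Union>N = {}"
  shows "matching_on W G (M \<union> N)"
  unfolding matching_on_def
proof (intro conjI)
  show "M \<union> N \<subseteq> G" "\<forall>e\<in>M \<union> N. e \<subseteq> W"
    using assms(1,2) by (auto simp: matching_on_def)
  show "pairwise disjnt (M \<union> N)"
  proof (rule pairwiseI)
    fix e f assume ef: "e \<in> M \<union> N" "f \<in> M \<union> N" "e \<noteq> f"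
    have "pairwise disjnt M" "pairwise disjnt N"
      using assms(1,2) by (simp_all add: matching_on_def)
    moreover have cross: "disjnt e f" if "e \<in> M" "f \<in> N" for e f
      using that assms(3) by (auto simp: disjnt_def)
    ultimately show "disjnt e f"
      using ef cross[of e f] cross[of f e] by (metis UnE disjnt_sym pairwiseD)
  qed
qed

lemma matching_on_image:
  assumes "\<And>i. i \<in> I \<Longrightarrow> f i \<in> G" "\<And>i. i \<in> I \<Longrightarrow> f i \<subseteq> W" "\<And>i. i \<in> I \<Longrightarrow> f i \<noteq> {}"
    and "\<And>i j. i \<in> I \<Longrightarrow> j \<in> I \<Longrightarrow> i \<noteq> j \<Longrightarrow> f i \<inter> f j = {}"
  shows "matching_on W G (f ` I)" and "inj_on f I"
proof -
  have "pairwise disjnt (f ` I)"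
    by (rule pairwise_imageI) (use assms(4) in \<open>simp add: disjnt_def\<close>)
  then show "matching_on W G (f ` I)"
    using assms(1,2) by (auto simp: matching_on_def)
  show "inj_on f I"
  proof (rule inj_onI, rule ccontr)
    fix i j assume "i \<in> I" "j \<in> I" "f i = f j" "i \<noteq> j"
    then show False
      using assms(3)[of i] assms(4)[of i j] by simp
  qed
qed

lemma finite_matching_on: "finite W \<Longrightarrow> matching_on W G M \<Longrightarrow> finite M"
  unfolding matching_on_def by (meson Pow_iff finite_Pow_iff finite_subset subsetI)

lemma matching_on_Union_subset: "matching_on W G M \<Longrightarrow> \<Union>M \<subseteq> W"
  unfolding matching_on_def by blast

lemma finite_Union_matching_on: "finite W \<Longrightarrow> matching_on W G M \<Longrightarrow> finite (\<Union>M)"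
  using matching_on_Union_subset finite_subset by metis

lemma maximum_matching_on_imp_matching_on: "maximum_matching_on W G M \<Longrightarrow> matching_on W G M"
  by (simp add: maximum_matching_on_def)

lemma maximum_matching_on_card_le:
  "maximum_matching_on W G M \<Longrightarrow> matching_on W G N \<Longrightarrow> card N \<le> card M"
  by (simp add: maximum_matching_on_def)

lemma maximum_matching_on_iff_card_eq:
  "maximum_matching_on W G M \<Longrightarrow> matching_on W G N \<Longrightarrow> maximum_matching_on W G N \<longleftrightarrow> card N = card M"
  unfolding maximum_matching_on_def by (metis le_antisym)

lemma maximum_matching_on_exchange:
  assumes "finite W" "maximum_matching_on W G N" "f \<in> N" "e \<in> G" "e \<subseteq> W" "e \<notin> N"
    and "e \<inter> \<Union>N \<subseteq> f"
  shows "maximum_matching_on W G (insert e (N - {f}))"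
proof -
  have N: "matching_on W G N"
    using assms(2) by (rule maximum_matching_on_imp_matching_on)
  have "matching_on W G (insert e (N - {f}))"
    by (rule matching_on_exchange[OF N assms(3-5,7)])
  moreover have "card (insert e (N - {f})) = card N"
    using finite_matching_on[OF assms(1) N] assms(3,6)
    by (simp add: card_Suc_Diff1 del: card_Diff_insert)
  ultimately show ?thesis
    using maximum_matching_on_iff_card_eq[OF assms(2)] by blast
qed

lemma maximum_matching_on_exists:
  assumes "finite W"
  obtains M where "maximum_matching_on W G M"
proof -
  have "matching_on W G {}"
    by (simp add: matching_on_def)
  moreover have "card M < Suc (card (Pow W))" if "matching_on W G M" for M
    using that assms by (intro le_imp_less_Suc card_mono) (auto simp: matching_on_def)
  ultimately obtain M where "matching_on W G M" "\<forall>M'. matching_on W G M' \<longrightarrow> card M' \<le> card M"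
    using Lattices_Big.ex_has_greatest_nat[of "matching_on W G" "{}" card] by blast
  then show ?thesis
    using that by (simp add: maximum_matching_on_def)
qed

lemma maximum_matching_on_covers_neighbour:
  assumes "finite W" "maximum_matching_on W G M" "{u, v} \<in> G" "u \<in> W" "v \<in> W" "u \<notin> \<Union>M"
  shows "v \<in> \<Union>M"
proof (rule ccontr)
  assume "v \<notin> \<Union>M"
  then have larger: "matching_on W G (insert {u, v} M)"
    using assms by (intro matching_on_insert) (auto simp: maximum_matching_on_def)
  have "{u, v} \<notin> M"
    using assms(6) by blast
  moreover have "finite M"
    using assms(1,2) finite_matching_on by (auto simp: maximum_matching_on_def)
  ultimately have "card (insert {u, v} M) = Suc (card M)"
    by simp
  with larger show False
    using assms(2) by (fastforce simp: maximum_matching_on_def)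
qed

lemma card_matching_on_less_if_vertex_essential:
  assumes "maximum_matching_on W G M" "\<And>N. maximum_matching_on W G N \<Longrightarrow> v \<in> \<Union>N"
    and "matching_on (W - {v}) G N"
  shows "card N < card M"
proof -
  have N: "matching_on W G N"
    using assms(3) by (rule matching_on_mono) auto
  have "\<not> maximum_matching_on W G N"
    using assms(2) matching_on_Union_subset[OF assms(3)] by blast
  then show ?thesis
    using maximum_matching_on_iff_card_eq[OF assms(1) N] maximum_matching_on_card_le[OF assms(1) N]
    by linarith
qed

lemma card_matching_meeting_le:
  assumes "pairwise disjnt M" "finite Y"
  shows "card {e\<in>M. e \<inter> Y \<noteq> {}} \<le> card (Y \<inter> \<Union>M)"
proof -
  define pick where "pick e = (SOME y. y \<in> e \<inter> Y)" for e
  have pick: "pick e \<in> e \<inter> Y" if "e \<inter> Y \<noteq> {}" for e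
    unfolding pick_def by (rule someI_ex) (use that in blast)
  have "inj_on pick {e\<in>M. e \<inter> Y \<noteq> {}}"
  proof (rule inj_onI)
    fix e e' assume "e \<in> {e\<in>M. e \<inter> Y \<noteq> {}}" "e' \<in> {e\<in>M. e \<inter> Y \<noteq> {}}" "pick e = pick e'"
    then show "e = e'"
      using pick[of e] pick[of e'] assms(1) by (auto simp: pairwise_def disjnt_def)
  qed
  moreover have "pick ` {e\<in>M. e \<inter> Y \<noteq> {}} \<subseteq> Y \<inter> \<Union>M"
    using pick by blast
  ultimately show ?thesis
    using assms(2) by (meson card_inj_on_le finite_Int)
qed

lemma card_Union_nontrivial_components_le:
  assumes "finite W"
  shows "card (\<Union>{C\<in>components_on W G. 2 \<le> card C}) \<le> 3 * (\<Sum>C\<in>components_on W G. card C div 2)"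
proof -
  let ?big = "{C\<in>components_on W G. 2 \<le> card C}"
  have "card (\<Union>?big) \<le> (\<Sum>C\<in>?big. card C)"
    by (rule card_Union_le_sum_card)
  also have "\<dots> \<le> (\<Sum>C\<in>?big. 3 * (card C div 2))"
    by (rule sum_mono) auto
  also have "\<dots> \<le> (\<Sum>C\<in>components_on W G. 3 * (card C div 2))"
    using assms finite_components_on by (intro sum_mono2) auto
  finally show ?thesis
    by (simp add: sum_distrib_left)
qed

locale two_uniform =
  fixes G :: "'a set set"
  assumes card_edge: "e \<in> G \<Longrightarrow> card e = 2"
begin

lemma card_Union_matching_on:
  assumes "finite W" "matching_on W G M"
  shows "card (\<Union>M) = 2 * card M"
proof -
  have edges: "\<And>e. e \<in> M \<Longrightarrow> card e = 2"
    using assms(2) card_edge by (auto simp: matching_on_def)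
  moreover have "pairwise disjnt M"
    using assms(2) by (simp add: matching_on_def)
  ultimately have "card (\<Union>M) = sum card M"
    by (intro card_Union_disjoint) (auto intro: card_ge_0_finite)
  also have "\<dots> = 2 * card M"
    using edges by simp
  finally show ?thesis .
qed

lemma edge_in_component:
  assumes "e \<in> G" "e \<subseteq> W"
  obtains C where "C \<in> components_on W G" "e \<subseteq> C"
proof -
  obtain u v where "e = {u, v}"
    using card_edge[OF assms(1)] by (auto simp: card_2_iff)
  then show ?thesis
    using assms edge_subset_component[of u v G W] that by auto
qed

lemma card_matching_on_eq_sum_components:
  assumes "finite W" "matching_on W G M"
  shows "card M = (\<Sum>C\<in>components_on W G. card {e\<in>M. e \<subseteq> C})"
proof -
  have "M \<subseteq> (\<Union>C\<in>components_on W G. {e\<in>M. e \<subseteq> C})"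
  proof
    fix e assume "e \<in> M"
    moreover from this obtain C where "C \<in> components_on W G" "e \<subseteq> C"
      using assms(2) edge_in_component by (metis matching_on_def subsetD)
    ultimately show "e \<in> (\<Union>C\<in>components_on W G. {e\<in>M. e \<subseteq> C})"
      by blast
  qed
  then have "M = (\<Union>C\<in>components_on W G. {e\<in>M. e \<subseteq> C})"
    by blast
  also have "card \<dots> = (\<Sum>C\<in>components_on W G. card {e\<in>M. e \<subseteq> C})"
  proof (rule card_UN_disjoint)
    show "\<forall>C\<in>components_on W G. \<forall>C'\<in>components_on W G. C \<noteq> C' \<longrightarrow>
        {e\<in>M. e \<subseteq> C} \<inter> {e\<in>M. e \<subseteq> C'} = {}"
    proof (intro ballI impI equals0I)
      fix C C' e
      assume C: "C \<in> components_on W G" "C' \<in> components_on W G" "C \<noteq> C'"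
        and e: "e \<in> {e\<in>M. e \<subseteq> C} \<inter> {e\<in>M. e \<subseteq> C'}"
      then have "e \<noteq> {}"
        using assms(2) card_edge by (force simp: matching_on_def)
      then obtain v where "v \<in> C" "v \<in> C'"
        using e by blast
      then show False
        using components_on_disjoint[OF C(1,2)] C(3) by blast
    qed
  qed (use assms finite_components_on finite_matching_on[OF assms] in auto)
  finally show ?thesis .
qed

lemma card_matching_in_component_le:
  assumes "finite W" "matching_on W G M" "C \<in> components_on W G"
  shows "2 * card {e\<in>M. e \<subseteq> C} \<le> card C"
proof -
  have "2 * card {e\<in>M. e \<subseteq> C} = card (\<Union>{e\<in>M. e \<subseteq> C})"
    using assms(1) matching_on_subset[OF assms(2)] by (simp add: card_Union_matching_on)
  also have "\<dots> \<le> card C"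
    using assms(1) components_on_subset[OF assms(3)] by (intro card_mono) (auto intro: finite_subset)
  finally show ?thesis .
qed

lemma card_matching_on_le_components:
  assumes "finite W" "matching_on W G M"
  shows "card M \<le> (\<Sum>C\<in>components_on W G. card C div 2)"
  unfolding card_matching_on_eq_sum_components[OF assms]
proof (rule sum_mono)
  fix C assume "C \<in> components_on W G"
  then have "2 * card {e\<in>M. e \<subseteq> C} \<le> card C"
    by (rule card_matching_in_component_le[OF assms])
  then show "card {e\<in>M. e \<subseteq> C} \<le> card C div 2"
    by presburger
qed

text \<open>The easy direction of the Tutte--Berge formula.\<close>

lemma card_matching_on_le_deficiency:
  assumes "finite W" "matching_on W G M" "Y \<subseteq> W"
  shows "card M + card (Y - \<Union>M) \<le> card Y + (\<Sum>C\<in>components_on (W - Y) G. card C div 2)"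
proof -
  have finY: "finite Y"
    using assms(1,3) by (rule rev_finite_subset)
  have "card M = card ({e\<in>M. e \<inter> Y \<noteq> {}} \<union> {e\<in>M. e \<inter> Y = {}})"
    by (rule arg_cong[where f = card]) blast
  also have "\<dots> = card {e\<in>M. e \<inter> Y \<noteq> {}} + card {e\<in>M. e \<inter> Y = {}}"
    using finite_matching_on[OF assms(1,2)] by (intro card_Un_disjoint) auto
  finally have "card M = card {e\<in>M. e \<inter> Y \<noteq> {}} + card {e\<in>M. e \<inter> Y = {}}" .
  moreover have "card {e\<in>M. e \<inter> Y \<noteq> {}} \<le> card (Y \<inter> \<Union>M)"
    using assms(2) finY by (intro card_matching_meeting_le) (simp add: matching_on_def)
  moreover have "matching_on (W - Y) G {e\<in>M. e \<inter> Y = {}}"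
    using assms(2) unfolding matching_on_def by (auto intro: pairwise_subset)
  then have "card {e\<in>M. e \<inter> Y = {}} \<le> (\<Sum>C\<in>components_on (W - Y) G. card C div 2)"
    using assms(1) by (intro card_matching_on_le_components) simp
  moreover have "card (Y \<inter> \<Union>M) + card (Y - \<Union>M) = card Y"
    using finY by (rule card_Int_Diff[symmetric])
  ultimately show ?thesis
    by linarith
qed

section \<open>Tutte--Berge barriers\<close>

lemma maximum_matching_on_increase_overlap:
  assumes fin: "finite W" and M: "maximum_matching_on W G M"
    and N: "maximum_matching_on W G N" "w \<notin> \<Union>N"
    and z: "z \<in> \<Union>M" "z \<noteq> w" "z \<notin> \<Union>N"
  obtains N' where "maximum_matching_on W G N'" "w \<notin> \<Union>N'" "card (M \<inter> N') = Suc (card (M \<inter> N))"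
proof -
  obtain e where e: "e \<in> M" "z \<in> e"
    using z(1) by blast
  have eG: "e \<in> G" and eW: "e \<subseteq> W"
    using M e(1) by (auto simp: maximum_matching_on_def matching_on_def)
  obtain a b where "e = {a, b}"
    using card_edge[OF eG] by (auto simp: card_2_iff)
  then obtain y where ezy: "e = {z, y}"
    using e(2) by (metis insertE insert_commute singletonD)
  have "y \<in> \<Union>N"
    using maximum_matching_on_covers_neighbour[of W G N z y] fin N ezy eG eW z(3) by auto
  then obtain f where f: "f \<in> N" "y \<in> f"
    by blast
  have "g = f" if "g \<in> N" "y \<in> g" for g
    using N(1) f that unfolding maximum_matching_on_def matching_on_def pairwise_def disjnt_def by blast
  then have "e \<inter> \<Union>N \<subseteq> f"
    using z(3) ezy f(2) by blast
  moreover have "e \<notin> N"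
    using z(3) e(2) by blast
  ultimately have maximum: "maximum_matching_on W G (insert e (N - {f}))"
    using maximum_matching_on_exchange[OF fin N(1) f(1) eG eW] by blast
  have avoids: "w \<notin> \<Union>(insert e (N - {f}))"
    using N(2) z(2) \<open>y \<in> \<Union>N\<close> ezy by auto
  have "f \<notin> M"
  proof
    assume "f \<in> M"
    moreover have "f \<noteq> e"
      using z(3) f(1) ezy by blast
    ultimately have "disjnt e f"
      using M e(1) by (auto simp: maximum_matching_on_def matching_on_def pairwise_def)
    then show False
      using f(2) ezy by (auto simp: disjnt_def)
  qed
  then have "M \<inter> insert e (N - {f}) = insert e (M \<inter> N)"
    using e(1) by blast
  moreover have "finite N"
    using fin N(1) finite_matching_on maximum_matching_on_imp_matching_on by blast
  ultimately have "card (M \<inter> insert e (N - {f})) = Suc (card (M \<inter> N))"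
    using \<open>e \<notin> N\<close> by simp
  with maximum avoids show ?thesis
    by (rule that)
qed

lemma maximum_matching_on_avoiding_covers:
  assumes fin: "finite W" and M: "maximum_matching_on W G M"
    and N0: "maximum_matching_on W G N0" "w \<notin> \<Union>N0"
  obtains N where "maximum_matching_on W G N" "w \<notin> \<Union>N" "\<Union>M - {w} \<subseteq> \<Union>N"
proof -
  let ?P = "\<lambda>N. maximum_matching_on W G N \<and> w \<notin> \<Union>N"
  have "finite M"
    using fin M finite_matching_on by (auto simp: maximum_matching_on_def)
  then have "\<forall>N. ?P N \<longrightarrow> card (M \<inter> N) < Suc (card M)"
    by (simp add: card_mono le_imp_less_Suc)
  then have "\<exists>N. ?P N \<and> (\<forall>N'. ?P N' \<longrightarrow> card (M \<inter> N') \<le> card (M \<inter> N))"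
    using N0 by (intro Lattices_Big.ex_has_greatest_nat[of ?P N0]) simp_all
  then obtain N where N: "?P N" and most: "\<And>N'. ?P N' \<Longrightarrow> card (M \<inter> N') \<le> card (M \<inter> N)"
    by blast
  have "\<Union>M - {w} \<subseteq> \<Union>N"
  proof
    fix z assume "z \<in> \<Union>M - {w}"
    show "z \<in> \<Union>N"
    proof (rule ccontr)
      assume "z \<notin> \<Union>N"
      with \<open>z \<in> \<Union>M - {w}\<close> obtain N' where "?P N'" "card (M \<inter> N') = Suc (card (M \<inter> N))"
        using maximum_matching_on_increase_overlap[OF fin M] N by blast
      then show False
        using most by fastforce
    qed
  qed
  then show ?thesis
    using N that by blast
qed

text \<open>The core of Gallai's lemma, by induction along a path from u to v. The second vertex z
  of the path is covered by M; a maximum matching avoiding z that covers the rest of M must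
  also cover u (a neighbour of z) and, by induction, v, so it covers one vertex more than M.\<close>

lemma maximum_matching_on_uncovered_connected:
  assumes fin: "finite W"
    and avoidable: "\<And>w. w \<in> W \<Longrightarrow> \<exists>N. maximum_matching_on W G N \<and> w \<notin> \<Union>N"
    and path: "(u, v) \<in> (adjacency_on W G)\<^sup>*"
  shows "maximum_matching_on W G M \<Longrightarrow> u \<notin> \<Union>M \<Longrightarrow> v \<notin> \<Union>M \<Longrightarrow> u = v"
  using path
proof (induction arbitrary: M rule: converse_rtrancl_induct)
  case base
  then show ?case by simp
next
  case (step y z)
  have yz: "{y, z} \<in> G" "y \<in> W" "z \<in> W"
    using step.hyps(1) by (auto simp: adjacency_on_def)
  have zM: "z \<in> \<Union>M"
    using maximum_matching_on_covers_neighbour[OF fin step.prems(1) yz step.prems(2)] .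
  obtain N0 where N0: "maximum_matching_on W G N0" "z \<notin> \<Union>N0"
    using avoidable yz(3) by blast
  obtain N where N: "maximum_matching_on W G N" "z \<notin> \<Union>N" and cover: "\<Union>M - {z} \<subseteq> \<Union>N"
    by (rule maximum_matching_on_avoiding_covers[OF fin step.prems(1) N0])
  have yN: "y \<in> \<Union>N"
    using maximum_matching_on_covers_neighbour[of W G N z y] fin N yz by (simp add: insert_commute)
  have vN: "v \<in> \<Union>N"
    using step.IH[OF N(1,2)] zM step.prems(3) by blast
  have "card N = card M"
    using step.prems(1) N(1) maximum_matching_on_imp_matching_on maximum_matching_on_iff_card_eq
    by blast
  then have same_size: "card (\<Union>M) = card (\<Union>N)"
    using fin step.prems(1) N(1) by (simp add: card_Union_matching_on maximum_matching_on_imp_matching_on)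
  show "y = v"
  proof (rule ccontr)
    assume "y \<noteq> v"
    have finN: "finite (\<Union>N)" and finM: "finite (\<Union>M)"
      using fin N(1) step.prems(1) finite_Union_matching_on maximum_matching_on_imp_matching_on
      by blast+
    have "insert y (insert v (\<Union>M - {z})) \<subseteq> \<Union>N"
      using cover yN vN by blast
    then have "card (insert y (insert v (\<Union>M - {z}))) \<le> card (\<Union>N)"
      by (rule card_mono[OF finN])
    moreover have "card (insert y (insert v (\<Union>M - {z}))) = Suc (Suc (card (\<Union>M - {z})))"
      using finM step.prems(2,3) \<open>y \<noteq> v\<close> by simp
    moreover have "Suc (card (\<Union>M - {z})) = card (\<Union>M)"
      by (rule card_Suc_Diff1[OF finM zM])
    ultimately show False
      using same_size by simp
  qed
qed

lemma card_component_le_matching: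
  assumes fin: "finite W"
    and avoidable: "\<And>w. w \<in> W \<Longrightarrow> \<exists>N. maximum_matching_on W G N \<and> w \<notin> \<Union>N"
    and M: "maximum_matching_on W G M" and C: "C \<in> components_on W G"
  shows "card C \<le> 2 * card {e\<in>M. e \<subseteq> C} + 1"
proof -
  have match: "matching_on W G M"
    using M by (rule maximum_matching_on_imp_matching_on)
  have finC: "finite C"
    by (rule finite_subset[OF components_on_subset[OF C] fin])
  have uncovered: "card (C - \<Union>M) \<le> 1"
    using maximum_matching_on_uncovered_connected[OF fin avoidable components_on_connected[OF C] M]
    by (auto simp: card_le_Suc0_iff_eq finC)
  have "C \<inter> \<Union>M \<subseteq> \<Union>{e\<in>M. e \<subseteq> C}"
  proof
    fix v assume "v \<in> C \<inter> \<Union>M"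
    then obtain e where v: "v \<in> C" "v \<in> e" and e: "e \<in> M"
      by blast
    have "e \<in> G" "e \<subseteq> W"
      using match e unfolding matching_on_def by auto
    then obtain C' where C': "C' \<in> components_on W G" "e \<subseteq> C'"
      by (rule edge_in_component)
    then have "C' = C"
      using components_on_disjoint[OF C'(1) C, of v] v by blast
    then show "v \<in> \<Union>{e\<in>M. e \<subseteq> C}"
      using \<open>e \<subseteq> C'\<close> e v by blast
  qed
  moreover have "finite (\<Union>{e\<in>M. e \<subseteq> C})"
    by (rule finite_Union_matching_on[OF fin matching_on_subset[OF match]]) auto
  ultimately have "card (C \<inter> \<Union>M) \<le> card (\<Union>{e\<in>M. e \<subseteq> C})"
    by (intro card_mono)
  moreover have "card (\<Union>{e\<in>M. e \<subseteq> C}) = 2 * card {e\<in>M. e \<subseteq> C}"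
    using fin matching_on_subset[OF match] by (simp add: card_Union_matching_on)
  moreover have "card C = card (C \<inter> \<Union>M) + card (C - \<Union>M)"
    using finC by (rule card_Int_Diff)
  ultimately show ?thesis
    using uncovered by linarith
qed

lemma sum_components_le_maximum_matching:
  assumes fin: "finite W"
    and avoidable: "\<And>w. w \<in> W \<Longrightarrow> \<exists>N. maximum_matching_on W G N \<and> w \<notin> \<Union>N"
    and M: "maximum_matching_on W G M"
  shows "(\<Sum>C\<in>components_on W G. card C div 2) \<le> card M"
proof -
  have "(\<Sum>C\<in>components_on W G. card C div 2) \<le> (\<Sum>C\<in>components_on W G. card {e\<in>M. e \<subseteq> C})"
  proof (rule sum_mono)
    fix C assume "C \<in> components_on W G"
    then have "card C \<le> 2 * card {e\<in>M. e \<subseteq> C} + 1"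
      using card_component_le_matching[OF fin avoidable M] by blast
    then show "card C div 2 \<le> card {e\<in>M. e \<subseteq> C}"
      by presburger
  qed
  also have "\<dots> = card M"
    using card_matching_on_eq_sum_components[OF fin maximum_matching_on_imp_matching_on[OF M]] by simp
  finally show ?thesis .
qed

text \<open>The hard direction of the Tutte--Berge formula. If some vertex is covered by every
  maximum matching, deleting it lowers the matching number and we recurse; otherwise
  Gallai's lemma shows that the empty set is a barrier.\<close>

lemma exists_tutte_berge_barrier:
  assumes "finite W" "\<And>M. matching_on W G M \<Longrightarrow> card M \<le> s"
  shows "\<exists>X\<subseteq>W. card X + (\<Sum>C\<in>components_on (W - X) G. card C div 2) \<le> s"
  using assms
proof (induction "card W" arbitrary: W s rule: less_induct)
  case less
  obtain M where M: "maximum_matching_on W G M"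
    by (rule maximum_matching_on_exists[OF less.prems(1)])
  have "card M \<le> s"
    using less.prems(2) M by (simp add: maximum_matching_on_def)
  show ?case
  proof (cases "\<forall>w\<in>W. \<exists>N. maximum_matching_on W G N \<and> w \<notin> \<Union>N")
    case True
    then have "card {} + (\<Sum>C\<in>components_on (W - {}) G. card C div 2) \<le> s"
      using sum_components_le_maximum_matching[OF less.prems(1) _ M] \<open>card M \<le> s\<close> by simp
    then show ?thesis
      by blast
  next
    case False
    then obtain v where v: "v \<in> W" and essential: "\<And>N. maximum_matching_on W G N \<Longrightarrow> v \<in> \<Union>N"
      by blast
    have "card (W - {v}) < card W"
      using less.prems(1) v by (rule card_Diff1_less)
    moreover have "card N \<le> card M - 1" if "matching_on (W - {v}) G N" for N
      using card_matching_on_less_if_vertex_essential[OF M essential that] by simp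
    ultimately obtain X where X: "X \<subseteq> W - {v}"
      and bound: "card X + (\<Sum>C\<in>components_on (W - {v} - X) G. card C div 2) \<le> card M - 1"
      using less.hyps[of "W - {v}" "card M - 1"] less.prems(1) by auto
    have "card {} < card M"
      using card_matching_on_less_if_vertex_essential[OF M essential, of "{}"]
      by (simp add: matching_on_def)
    moreover have "finite X" "v \<notin> X"
      using X less.prems(1) by (auto intro: finite_subset)
    moreover have "W - insert v X = W - {v} - X"
      by blast
    ultimately have "card (insert v X) + (\<Sum>C\<in>components_on (W - insert v X) G. card C div 2) \<le> s"
      using bound \<open>card M \<le> s\<close> by simp
    then show ?thesis
      using X v by (intro exI[of _ "insert v X"]) auto
  qed
qed

lemma card_edges_within_le:
  assumes "finite W"
  shows "card {e\<in>G. e \<subseteq> W} \<le> (3 * (\<Sum>C\<in>components_on W G. card C div 2)) choose 2"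
proof -
  define U where "U = \<Union>{C\<in>components_on W G. 2 \<le> card C}"
  have fin_C: "finite C" if "C \<in> components_on W G" for C
    by (rule finite_subset[OF components_on_subset[OF that] assms])
  have fin_U: "finite U"
    using finite_components_on[OF assms] fin_C by (auto simp: U_def)
  have "{e\<in>G. e \<subseteq> W} \<subseteq> {A. A \<subseteq> U \<and> card A = 2}"
  proof
    fix e assume e: "e \<in> {e\<in>G. e \<subseteq> W}"
    then have "e \<in> G" "e \<subseteq> W"
      by auto
    then obtain C where C: "C \<in> components_on W G" "e \<subseteq> C"
      by (rule edge_in_component)
    have "card e \<le> card C"
      using fin_C[OF C(1)] C(2) by (rule card_mono)
    then show "e \<in> {A. A \<subseteq> U \<and> card A = 2}"
      using C card_edge[OF \<open>e \<in> G\<close>] by (auto simp: U_def)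
  qed
  then have "card {e\<in>G. e \<subseteq> W} \<le> card {A. A \<subseteq> U \<and> card A = 2}"
    using fin_U by (intro card_mono) simp_all
  also have "\<dots> = card U choose 2"
    by (rule n_subsets[OF fin_U])
  also have "\<dots> \<le> (3 * (\<Sum>C\<in>components_on W G. card C div 2)) choose 2"
    unfolding U_def using assms by (intro binomial_right_mono card_Union_nontrivial_components_le)
  finally show ?thesis .
qed

end

section \<open>Admissible sets and the edge bound\<close>

lemma two_uniform_if_is_graph: "is_graph n G \<Longrightarrow> two_uniform G"
  unfolding is_graph_def by unfold_locales blast

lemma finite_if_is_graph: "is_graph n G \<Longrightarrow> finite G"
  unfolding is_graph_def by (rule finite_subset[of _ "Pow {0..<n}"]) auto

lemma card_matching_on_le_if_not_contains_matching:
  assumes "\<not> contains_matching (Suc s) G" "matching_on W G M"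
  shows "card M \<le> s"
proof (rule ccontr)
  assume "\<not> card M \<le> s"
  then obtain M' where "M' \<subseteq> M" "card M' = Suc s"
    using obtain_subset_with_card_n[of "Suc s" M] by auto
  moreover have "M' \<subseteq> G" "\<forall>e\<in>M'. \<forall>f\<in>M'. e \<noteq> f \<longrightarrow> e \<inter> f = {}"
    using assms(2) \<open>M' \<subseteq> M\<close> unfolding matching_on_def pairwise_def disjnt_def
    by (blast, metis subsetD)
  ultimately have "contains_matching (Suc s) G"
    unfolding contains_matching_def by auto
  with assms(1) show False ..
qed

lemma exists_admissible:
  assumes "is_graph n G" "\<not> contains_matching (Suc s) G"
  shows "\<exists>X. admissible n s G X"
proof -
  interpret two_uniform G
    using assms(1) by (rule two_uniform_if_is_graph)
  obtain X where "X \<subseteq> {0..<n}" "card X + (\<Sum>C\<in>components_on ({0..<n} - X) G. card C div 2) \<le> s"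
    using exists_tutte_berge_barrier[of "{0..<n}" s]
      card_matching_on_le_if_not_contains_matching[OF assms(2)] by auto
  then show ?thesis
    unfolding admissible_def components_eq_components_on by blast
qed

lemma finite_admissible_cards: "finite {card X | X. admissible n s G X}"
proof (rule finite_subset)
  show "{card X | X. admissible n s G X} \<subseteq> {..n}"
    unfolding admissible_def using card_mono[of "{0..<n}"] by fastforce
qed simp

lemma admissible_card_xG:
  assumes "is_graph n G" "\<not> contains_matching (Suc s) G"
  obtains X where "admissible n s G X" "card X = xG n s G"
proof -
  have "xG n s G \<in> {card X | X. admissible n s G X}"
    unfolding xG_def using exists_admissible[OF assms] finite_admissible_cards
    by (intro Max_in) auto
  then obtain X where "admissible n s G X" "card X = xG n s G"
    by auto
  then show ?thesis
    by (rule that)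
qed

lemma xG_eqI:
  assumes "admissible n s G X" "card X = p" "\<And>Y. admissible n s G Y \<Longrightarrow> card Y \<le> p"
  shows "xG n s G = p"
  unfolding xG_def using assms finite_admissible_cards by (intro Max_eqI) auto

lemma card_edges_meeting_le:
  assumes "is_graph n G" "finite X"
  shows "card {e\<in>G. e \<inter> X \<noteq> {}} \<le> card X * n"
proof -
  have "{e\<in>G. e \<inter> X \<noteq> {}} \<subseteq> (\<Union>a\<in>X. (\<lambda>b. {a, b}) ` {0..<n})"
  proof
    fix e assume e: "e \<in> {e\<in>G. e \<inter> X \<noteq> {}}"
    then obtain a where a: "a \<in> e" "a \<in> X"
      by blast
    obtain u v where "e = {u, v}" "u \<in> {0..<n}" "v \<in> {0..<n}"
      using e assms(1) unfolding is_graph_def card_2_iff by (metis insert_subset mem_Collect_eq)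
    then have "e = {a, v} \<and> v \<in> {0..<n} \<or> e = {a, u} \<and> u \<in> {0..<n}"
      using a(1) by auto
    then show "e \<in> (\<Union>a\<in>X. (\<lambda>b. {a, b}) ` {0..<n})"
      using a(2) by blast
  qed
  then have "card {e\<in>G. e \<inter> X \<noteq> {}} \<le> card (\<Union>a\<in>X. (\<lambda>b. {a, b}) ` {0..<n})"
    using assms(2) by (intro card_mono) auto
  also have "\<dots> \<le> (\<Sum>a\<in>X. card ((\<lambda>b. {a, b}) ` {0..<n}))"
    using assms(2) by (rule card_UN_le)
  also have "\<dots> \<le> (\<Sum>a\<in>X. n)"
    by (intro sum_mono) (metis card_atLeastLessThan card_image_le finite_atLeastLessThan diff_zero)
  finally show ?thesis
    by simp
qed

lemma card_edges_le_if_admissible: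
  assumes "is_graph n G" "admissible n s G X"
  shows "card G \<le> card X * n + ((3 * s) choose 2)"
proof -
  interpret two_uniform G
    using assms(1) by (rule two_uniform_if_is_graph)
  have X: "X \<subseteq> {0..<n}" and deficiency: "card X + (\<Sum>C\<in>components_on ({0..<n} - X) G. card C div 2) \<le> s"
    using assms(2) by (auto simp: admissible_def components_eq_components_on)
  define meeting where "meeting = {e\<in>G. e \<inter> X \<noteq> {}}"
  define within where "within = {e\<in>G. e \<subseteq> {0..<n} - X}"
  have "G \<subseteq> meeting \<union> within"
    using assms(1) by (auto simp: is_graph_def meeting_def within_def)
  moreover have "finite (meeting \<union> within)"
    using finite_if_is_graph[OF assms(1)] by (simp add: meeting_def within_def)
  ultimately have "card G \<le> card (meeting \<union> within)"
    by (intro card_mono)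
  also have "\<dots> \<le> card meeting + card within"
    by (rule card_Un_le)
  also have "\<dots> \<le> card X * n + ((3 * s) choose 2)"
  proof (rule add_mono)
    have "finite X"
      using X by (rule finite_subset) simp
    then show "card meeting \<le> card X * n"
      unfolding meeting_def using assms(1) by (intro card_edges_meeting_le)
    have "card within \<le> (3 * (\<Sum>C\<in>components_on ({0..<n} - X) G. card C div 2)) choose 2"
      unfolding within_def by (intro card_edges_within_le) simp
    also have "\<dots> \<le> (3 * s) choose 2"
      using deficiency by (intro binomial_right_mono) simp
    finally show "card within \<le> (3 * s) choose 2" .
  qed
  finally show ?thesis .
qed

lemma card_edges_le_xG:
  assumes "is_graph n G" "\<not> contains_matching (Suc s) G"
  shows "card G \<le> xG n s G * n + ((3 * s) choose 2)"
  using admissible_card_xG[OF assms] card_edges_le_if_admissible[OF assms(1)] by metis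

section \<open>The extremal graph\<close>

definition complete_bipartite_edges :: "'a set \<Rightarrow> 'a set \<Rightarrow> 'a set set" where
  "complete_bipartite_edges A B = {{a, b} | a b. a \<in> A \<and> b \<in> B}"

definition triangle :: "nat \<Rightarrow> nat \<Rightarrow> nat set" where
  "triangle p i = {p + 3 * i..<p + 3 * i + 3}"

definition extremal_graph :: "nat \<Rightarrow> nat \<Rightarrow> nat \<Rightarrow> nat set set" where
  "extremal_graph n p k =
     complete_bipartite_edges {0..<p} {p + 3 * k..<n} \<union> {e. card e = 2 \<and> (\<exists>i<k. e \<subseteq> triangle p i)}"

lemma card_complete_bipartite_edges:
  assumes "finite A" "finite B" "A \<inter> B = {}"
  shows "card (complete_bipartite_edges A B) = card A * card B"
proof -
  have "complete_bipartite_edges A B = (\<lambda>(a, b). {a, b}) ` (A \<times> B)"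
    unfolding complete_bipartite_edges_def by fastforce
  moreover have "inj_on (\<lambda>(a, b). {a, b}) (A \<times> B)"
    using assms(3) by (auto intro!: inj_onI simp: doubleton_eq_iff)
  ultimately show ?thesis
    by (simp add: card_image card_cartesian_product)
qed

lemma complete_bipartite_edges_mono:
  "B \<subseteq> B' \<Longrightarrow> complete_bipartite_edges A B \<subseteq> complete_bipartite_edges A B'"
  unfolding complete_bipartite_edges_def by blast

lemma matching_on_complete_bipartite_edges:
  assumes "finite A" "finite B" "card A \<le> card B" "A \<inter> B = {}"
  obtains M where "matching_on (A \<union> B) (complete_bipartite_edges A B) M" "card M = card A"
proof -
  obtain f where f: "f ` A \<subseteq> B" "inj_on f A"
    using card_le_inj[OF assms(1-3)] by blast
  have disjoint: "{a, f a} \<inter> {a', f a'} = {}" if "a \<in> A" "a' \<in> A" "a \<noteq> a'" for a a'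
  proof -
    have "f a \<noteq> f a'"
      using f(2) that by (meson inj_onD)
    moreover have "f a \<in> B" "f a' \<in> B"
      using f(1) that by auto
    ultimately show ?thesis
      using that assms(4) by auto
  qed
  have edge: "{a, f a} \<in> complete_bipartite_edges A B" "{a, f a} \<subseteq> A \<union> B" if "a \<in> A" for a
    using that f(1) unfolding complete_bipartite_edges_def by blast+
  have "matching_on (A \<union> B) (complete_bipartite_edges A B) ((\<lambda>a. {a, f a}) ` A)"
    and "inj_on (\<lambda>a. {a, f a}) A"
    by (rule matching_on_image[OF edge _ disjoint]; simp)+
  then show ?thesis
    using that card_image by metis
qed

lemma triangle_index: "m \<in> triangle p i \<Longrightarrow> (m - p) div 3 = i"
  unfolding triangle_def by (auto intro!: div_nat_eqI)

lemma triangle_disjoint: "i \<noteq> j \<Longrightarrow> triangle p i \<inter> triangle p j = {}"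
  using triangle_index by blast

lemma card_triangle: "card (triangle p i) = 3"
  by (simp add: triangle_def)

lemma finite_triangle: "finite (triangle p i)"
  by (simp add: triangle_def)

lemma triangle_bounds: "m \<in> triangle p i \<Longrightarrow> i < k \<Longrightarrow> p \<le> m \<and> m < p + 3 * k"
  unfolding triangle_def by auto

lemma extremal_graph_edgeE:
  assumes "e \<in> extremal_graph n p k"
  obtains (join) a b where "e = {a, b}" "a < p" "p + 3 * k \<le> b" "b < n"
    | (triangle) i where "card e = 2" "i < k" "e \<subseteq> triangle p i"
  using assms unfolding extremal_graph_def complete_bipartite_edges_def by auto

lemma is_graph_extremal_graph:
  assumes "p + 3 * k \<le> n"
  shows "is_graph n (extremal_graph n p k)"
  unfolding is_graph_def
proof
  fix e assume "e \<in> extremal_graph n p k"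
  then show "e \<subseteq> {0..<n} \<and> card e = 2"
  proof (cases rule: extremal_graph_edgeE)
    case (triangle i)
    then show ?thesis
      using triangle_bounds[of _ p i k] assms by fastforce
  qed auto
qed

lemma extremal_graph_edge_from_high:
  assumes "{a, b} \<in> extremal_graph n p k" "p \<le> a"
  shows "(b < p \<and> p + 3 * k \<le> a) \<or> (\<exists>i<k. a \<in> triangle p i \<and> b \<in> triangle p i \<and> b \<noteq> a)"
  using assms(1)
proof (cases rule: extremal_graph_edgeE)
  case join
  then show ?thesis
    using assms(2) by (auto simp: doubleton_eq_iff)
next
  case (triangle i)
  then show ?thesis
    by (cases "a = b") auto
qed

lemma extremal_graph_neighbours:
  assumes "p \<le> a" "2 \<le> p"
  obtains S where "finite S" "card S \<le> p" "{b. {a, b} \<in> extremal_graph n p k} \<subseteq> S"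
proof (cases "\<exists>i<k. a \<in> triangle p i")
  case True
  then obtain i where i: "i < k" "a \<in> triangle p i"
    by blast
  have "{b. {a, b} \<in> extremal_graph n p k} \<subseteq> triangle p i - {a}"
    using extremal_graph_edge_from_high[OF _ assms(1)] triangle_bounds[OF i(2,1)] triangle_index[OF i(2)]
    by (force dest: triangle_index)
  moreover have "card (triangle p i - {a}) \<le> p"
    using i(2) assms(2) by (simp add: card_triangle finite_triangle)
  ultimately show ?thesis
    by (intro that[of "triangle p i - {a}"]) (simp_all add: finite_triangle)
next
  case False
  then have "{b. {a, b} \<in> extremal_graph n p k} \<subseteq> {0..<p}"
    using extremal_graph_edge_from_high[OF _ assms(1)] by fastforce
  then show ?thesis
    by (intro that[of "{0..<p}"]) simp_all
qed

lemma extremal_graph_not_contains_Klt: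
  assumes "2 \<le> p" "p < t"
  shows "\<not> contains_Klt n (p + 1) t (extremal_graph n p k)"
proof
  assume "contains_Klt n (p + 1) t (extremal_graph n p k)"
  then obtain A B where A: "card A = p + 1" and B: "card B = t"
    and complete: "\<forall>a\<in>A. \<forall>b\<in>B. {a, b} \<in> extremal_graph n p k"
    unfolding contains_Klt_def by auto
  have "\<not> A \<subseteq> {0..<p}"
  proof
    assume "A \<subseteq> {0..<p}"
    then have "card A \<le> p"
      using card_mono[of "{0..<p}" A] by simp
    with A show False
      by simp
  qed
  then obtain a where "a \<in> A" "p \<le> a"
    by (meson atLeastLessThan_iff not_less subsetI zero_le)
  obtain S where S: "finite S" "card S \<le> p" "{b. {a, b} \<in> extremal_graph n p k} \<subseteq> S"
    using extremal_graph_neighbours[OF \<open>p \<le> a\<close> assms(1)] .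
  have "B \<subseteq> S"
    using complete \<open>a \<in> A\<close> S(3) by blast
  then have "card B \<le> p"
    using card_mono[OF S(1)] S(2) by (meson order_trans)
  then show False
    using B assms(2) by simp
qed

lemma two_uniform_extremal_graph: "two_uniform (extremal_graph n p k)"
proof
  fix e assume "e \<in> extremal_graph n p k"
  then show "card e = 2"
    by (cases rule: extremal_graph_edgeE) auto
qed

lemma extremal_graph_walk_in_triangle:
  assumes "(c, w) \<in> (adjacency_on {p..<n} (extremal_graph n p k))\<^sup>*"
  shows "w = c \<or> (\<exists>i<k. c \<in> triangle p i \<and> w \<in> triangle p i)"
  using assms
proof (induction rule: rtrancl_induct)
  case (step y z)
  have "p \<le> y" "p \<le> z" "{y, z} \<in> extremal_graph n p k"
    using step.hyps(2) by (auto simp: adjacency_on_def)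
  then obtain j where j: "j < k" "y \<in> triangle p j" "z \<in> triangle p j"
    using extremal_graph_edge_from_high[of y z n p k] by auto
  from step.IH show ?case
  proof
    assume "y = c"
    then show ?thesis
      using j by blast
  next
    assume "\<exists>i<k. c \<in> triangle p i \<and> y \<in> triangle p i"
    then show ?thesis
      using j triangle_index by metis
  qed
qed simp

lemma extremal_graph_component_in_triangle:
  assumes c: "c \<in> {p..<n}" and i: "i < k" "c \<in> triangle p i"
  defines "C \<equiv> component_of {p..<n} (extremal_graph n p k) c"
  shows "C \<subseteq> triangle p i" and "C = component_of {p..<n} (extremal_graph n p k) (p + 3 * i)"
proof -
  let ?G = "extremal_graph n p k" and ?W = "{p..<n}"
  show "C \<subseteq> triangle p i"
  proof
    fix w assume "w \<in> C"
    then consider "w = c" | j where "c \<in> triangle p j" "w \<in> triangle p j"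
      using extremal_graph_walk_in_triangle[of c w p n k] by (auto simp: C_def component_of_def)
    then show "w \<in> triangle p i"
    proof cases
      case 2
      then show ?thesis
        using triangle_index[OF i(2)] triangle_index[of c p j] by simp
    qed (use i in simp)
  qed
  have "p + 3 * i \<in> C"
  proof (cases "c = p + 3 * i")
    case True
    then show ?thesis
      using mem_component_of_self[OF c] by (simp add: C_def)
  next
    case False
    then have "{c, p + 3 * i} \<in> ?G"
      using i by (auto simp: extremal_graph_def triangle_def card_insert_if)
    then have "(c, p + 3 * i) \<in> adjacency_on ?W ?G"
      using c i(2) by (auto simp: adjacency_on_def triangle_def)
    then show ?thesis
      using c i(2) by (auto simp: C_def component_of_def triangle_def)
  qed
  then show "C = component_of ?W ?G (p + 3 * i)"
    unfolding C_def by (rule component_of_eq[symmetric])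
qed

lemma extremal_graph_components_deficiency:
  "(\<Sum>C\<in>components_on {p..<n} (extremal_graph n p k). card C div 2) \<le> k"
proof -
  let ?G = "extremal_graph n p k" and ?W = "{p..<n}"
  let ?T = "(\<lambda>i. component_of ?W ?G (p + 3 * i)) ` {..<k}"
  have "card C div 2 \<le> (if C \<in> ?T then 1 else 0)" if C: "C \<in> components_on ?W ?G" for C
  proof -
    obtain c where c: "c \<in> ?W" "C = component_of ?W ?G c"
      using C by (auto simp: components_on_def)
    show ?thesis
    proof (cases "\<exists>i<k. c \<in> triangle p i")
      case True
      then obtain i where "i < k" "c \<in> triangle p i"
        by blast
      note in_triangle = extremal_graph_component_in_triangle[OF c(1) this]
      have "card C \<le> 3"
        using card_mono[OF finite_triangle in_triangle(1)] c(2) by (simp add: card_triangle)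
      moreover have "C \<in> ?T"
        using in_triangle(2) c(2) \<open>i < k\<close> by blast
      ultimately show ?thesis
        by simp
    next
      case False
      then have "C \<subseteq> {c}"
        using extremal_graph_walk_in_triangle[of c _ p n k] c(2) by (auto simp: component_of_def)
      then have "card C \<le> 1"
        using card_mono[of "{c}" C] by simp
      then show ?thesis
        by simp
    qed
  qed
  then have "(\<Sum>C\<in>components_on ?W ?G. card C div 2) \<le> (\<Sum>C\<in>components_on ?W ?G. if C \<in> ?T then 1 else 0)"
    by (rule sum_mono)
  also have "\<dots> = card (components_on ?W ?G \<inter> ?T)"
    by (simp add: sum.If_cases finite_components_on)
  also have "\<dots> \<le> card ?T"
    by (intro card_mono) auto
  also have "\<dots> \<le> k"
    using card_image_le[of "{..<k}"] by simp
  finally show ?thesis .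
qed

lemma extremal_graph_not_contains_matching:
  assumes "p + 3 * k \<le> n"
  shows "\<not> contains_matching (Suc (p + k)) (extremal_graph n p k)"
proof
  let ?G = "extremal_graph n p k"
  interpret two_uniform ?G
    by (rule two_uniform_extremal_graph)
  assume "contains_matching (Suc (p + k)) ?G"
  then obtain M where M: "M \<subseteq> ?G" "card M = Suc (p + k)" "pairwise disjnt M"
    unfolding contains_matching_def pairwise_def disjnt_def by auto
  have "matching_on {0..<n} ?G M"
    using M is_graph_extremal_graph[OF assms] by (auto simp: matching_on_def is_graph_def)
  then have "card M + card ({0..<p} - \<Union>M) \<le> card {0..<p} + (\<Sum>C\<in>components_on ({0..<n} - {0..<p}) ?G. card C div 2)"
    using assms by (intro card_matching_on_le_deficiency) auto
  moreover have "{0..<n} - {0..<p} = {p..<n}"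
    by auto
  ultimately have "card M \<le> p + k"
    using extremal_graph_components_deficiency[of p n k] by simp
  with M(2) show False
    by simp
qed

lemma extremal_graph_join_matching:
  assumes "p + 3 * k + p < n" "p \<le> y"
  obtains M where "matching_on {0..<n} (extremal_graph n p k) M" "card M = p"
    "\<Union>M \<subseteq> {0..<p} \<union> {p + 3 * k..<n}" "y \<notin> \<Union>M"
proof -
  let ?B = "{p + 3 * k..<n} - {y}"
  have "p \<le> card ?B"
    using assms(1) by (simp add: card_Diff_singleton_if) arith
  then have "finite {0..<p}" "finite ?B" "card {0..<p} \<le> card ?B" "{0..<p} \<inter> ?B = {}"
    by auto
  then obtain M where M: "matching_on ({0..<p} \<union> ?B) (complete_bipartite_edges {0..<p} ?B) M"
    "card M = card {0..<p}"
    by (rule matching_on_complete_bipartite_edges)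
  have "complete_bipartite_edges {0..<p} ?B \<subseteq> extremal_graph n p k"
    unfolding extremal_graph_def using complete_bipartite_edges_mono[of ?B] by blast
  then have "matching_on {0..<n} (extremal_graph n p k) M"
    using M(1) by (rule matching_on_mono[rotated 2]) (use assms(1) in auto)
  moreover have "\<Union>M \<subseteq> {0..<p} \<union> ?B"
    using M(1) by (rule matching_on_Union_subset)
  ultimately show ?thesis
    using that M(2) assms(2) by fastforce
qed

lemma extremal_graph_triangle_matching:
  obtains M where "matching_on {p..<p + 3 * k} (extremal_graph n p k) M" "card M = k" "y \<notin> \<Union>M"
proof -
  define edge where
    "edge i = (if y \<in> triangle p i then triangle p i - {y} else {p + 3 * i, Suc (p + 3 * i)})" for i
  have edge: "edge i \<subseteq> triangle p i" "card (edge i) = 2" "y \<notin> edge i" for i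
    by (auto simp: edge_def triangle_def)
  have "edge i \<in> extremal_graph n p k" "edge i \<subseteq> {p..<p + 3 * k}" "edge i \<noteq> {}" if "i \<in> {..<k}" for i
    using that edge[of i] triangle_bounds[of _ p i k] by (auto simp: extremal_graph_def)
  moreover have "edge i \<inter> edge j = {}" if "i \<noteq> j" for i j
    using triangle_disjoint[OF that] edge(1)[of i] edge(1)[of j] by blast
  ultimately have "matching_on {p..<p + 3 * k} (extremal_graph n p k) (edge ` {..<k})"
    and "inj_on edge {..<k}"
    by (rule matching_on_image; blast)+
  moreover have "y \<notin> \<Union>(edge ` {..<k})"
    using edge(3) by blast
  ultimately show ?thesis
    using that card_image by fastforce
qed

lemma extremal_graph_matching_avoiding:
  assumes "p + 3 * k + p < n" "p \<le> y"
  obtains M where "matching_on {0..<n} (extremal_graph n p k) M" "card M = p + k" "y \<notin> \<Union>M"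
proof -
  interpret two_uniform "extremal_graph n p k"
    by (rule two_uniform_extremal_graph)
  obtain M1 where M1: "matching_on {0..<n} (extremal_graph n p k) M1" "card M1 = p"
    "\<Union>M1 \<subseteq> {0..<p} \<union> {p + 3 * k..<n}" "y \<notin> \<Union>M1"
    using extremal_graph_join_matching[OF assms] .
  obtain M2 where M2: "matching_on {p..<p + 3 * k} (extremal_graph n p k) M2" "card M2 = k" "y \<notin> \<Union>M2"
    using extremal_graph_triangle_matching .
  have "matching_on {0..<n} (extremal_graph n p k) M2"
    using M2(1) by (rule matching_on_mono) (use assms(1) in auto)
  moreover have "\<Union>M1 \<inter> {p..<p + 3 * k} = {}"
    using M1(3) by auto
  then have disjoint: "\<Union>M1 \<inter> \<Union>M2 = {}"
    using matching_on_Union_subset[OF M2(1)] by blast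
  ultimately have "matching_on {0..<n} (extremal_graph n p k) (M1 \<union> M2)"
    using M1(1) by (intro matching_on_Un)
  moreover have "M1 \<inter> M2 = {}"
  proof (rule equals0I)
    fix e assume e: "e \<in> M1 \<inter> M2"
    then have "e \<in> extremal_graph n p k"
      using M1(1) by (auto simp: matching_on_def)
    moreover have "e = {}"
      using e disjoint by blast
    ultimately show False
      using card_edge by fastforce
  qed
  then have "card (M1 \<union> M2) = p + k"
    using finite_matching_on[OF _ M1(1)] finite_matching_on[OF _ M2(1)] M1(2) M2(2)
    by (simp add: card_Un_disjoint)
  ultimately show ?thesis
    using that M1(4) M2(3) by blast
qed

lemma admissible_extremal_graph_card_le:
  assumes "p + 3 * k + p < n" "admissible n (p + k) (extremal_graph n p k) Y"
  shows "card Y \<le> p"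
proof (rule ccontr)
  let ?G = "extremal_graph n p k"
  interpret two_uniform ?G
    by (rule two_uniform_extremal_graph)
  have Y: "Y \<subseteq> {0..<n}" and deficiency: "card Y + (\<Sum>C\<in>components_on ({0..<n} - Y) ?G. card C div 2) \<le> p + k"
    using assms(2) by (auto simp: admissible_def components_eq_components_on)
  assume "\<not> card Y \<le> p"
  then have "\<not> Y \<subseteq> {0..<p}"
    using card_mono[of "{0..<p}" Y] by auto
  then obtain y where "y \<in> Y" "p \<le> y"
    by (meson atLeastLessThan_iff not_less subsetI zero_le)
  obtain M where M: "matching_on {0..<n} ?G M" "card M = p + k" "y \<notin> \<Union>M"
    using extremal_graph_matching_avoiding[OF assms(1) \<open>p \<le> y\<close>] .
  have "finite Y"
    using Y by (rule finite_subset) simp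
  then have "0 < card (Y - \<Union>M)"
    using \<open>y \<in> Y\<close> M(3) by (auto simp: card_gt_0_iff)
  moreover have "card M + card (Y - \<Union>M) \<le> card Y + (\<Sum>C\<in>components_on ({0..<n} - Y) ?G. card C div 2)"
    using M(1) Y by (intro card_matching_on_le_deficiency) simp_all
  ultimately show False
    using M(2) deficiency by linarith
qed

lemma xG_extremal_graph:
  assumes "p + 3 * k + p < n"
  shows "xG n (p + k) (extremal_graph n p k) = p"
proof (rule xG_eqI)
  have "{0..<n} - {0..<p} = {p..<n}"
    by auto
  then show "admissible n (p + k) (extremal_graph n p k) {0..<p}"
    unfolding admissible_def components_eq_components_on
    using assms extremal_graph_components_deficiency[of p n k] by simp
qed (use assms admissible_extremal_graph_card_le in auto)

lemma card_extremal_graph_ge: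
  assumes "p + 3 * k \<le> n"
  shows "p * (n - (p + 3 * k)) \<le> card (extremal_graph n p k)"
proof -
  have "card (complete_bipartite_edges {0..<p} {p + 3 * k..<n}) = p * (n - (p + 3 * k))"
    by (simp add: card_complete_bipartite_edges)
  moreover have "card (complete_bipartite_edges {0..<p} {p + 3 * k..<n}) \<le> card (extremal_graph n p k)"
    using finite_if_is_graph[OF is_graph_extremal_graph[OF assms]]
    by (rule card_mono) (simp add: extremal_graph_def)
  ultimately show ?thesis
    by simp
qed

lemma extremal_graph_in_GG:
  assumes "2 \<le> p" "p < t" "p + 3 * k + p < n"
  shows "extremal_graph n p k \<in> GG n (p + 1) t (p + k) p"
  using is_graph_extremal_graph[of p k n] extremal_graph_not_contains_Klt[OF assms(1,2)]
    extremal_graph_not_contains_matching[of p k n] xG_extremal_graph[OF assms(3)] assms(3)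
  by (simp add: GG_def)

lemma num_edges_le_extremal_graph:
  assumes "G \<in> GG n l t s x" "x < p" "s = p + k" "p * (p + 3 * k) + ((3 * s) choose 2) \<le> n"
  shows "num_edges G \<le> num_edges (extremal_graph n p k)"
proof -
  have "num_edges G \<le> x * n + ((3 * s) choose 2)"
    using assms(1) card_edges_le_xG[of n G s] by (simp add: GG_def num_edges_def)
  also have "\<dots> \<le> p * (n - (p + 3 * k))"
  proof -
    have "(x + 1) * n \<le> p * n"
      using assms(2) by (intro mult_le_mono1) simp
    then show ?thesis
      using assms(4) by (simp add: diff_mult_distrib2 algebra_simps)
  qed
  also have "\<dots> \<le> num_edges (extremal_graph n p k)"
  proof -
    have "p + 3 * k \<le> p * (p + 3 * k)"
      using mult_le_mono1[of 1 p "p + 3 * k"] assms(2) by simp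
    then have "p + 3 * k \<le> n"
      using assms(4) by linarith
    then show ?thesis
      unfolding num_edges_def by (rule card_extremal_graph_ge)
  qed
  finally show ?thesis .
qed

lemma three_mul_square_le_choose: "3 * (s * s) \<le> (3 * s) choose 2"
proof -
  have "3 * (s * s) * 2 \<le> 3 * s * (3 * s - 1)"
    by (cases s) (simp_all add: algebra_simps)
  then show ?thesis
    unfolding choose_two by (simp only: less_eq_div_iff_mult_less_eq zero_less_numeral)
qed

lemma extremal_graph_size_conditions:
  assumes "2 \<le> p" "1 \<le> k" "s = p + k" "2 * ((3 * s) choose 2) \<le> n"
  shows "p + 3 * k + p < n" "p * (p + 3 * k) + ((3 * s) choose 2) \<le> n"
proof -
  have "3 * (s * s) \<le> (3 * s) choose 2"
    by (rule three_mul_square_le_choose)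
  moreover have "p * (p + 3 * k) \<le> s * (3 * s)"
    using assms(3) by (intro mult_le_mono) simp_all
  moreover have "3 * s \<le> s * s"
    using assms(1-3) by (intro mult_le_mono1) simp
  ultimately show "p + 3 * k + p < n" "p * (p + 3 * k) + ((3 * s) choose 2) \<le> n"
    using assms by linarith+
qed

lemma finite_GG: "finite (GG n l t s x)"
  by (rule finite_subset[of _ "Pow (Pow {0..<n})"]) (auto simp: GG_def is_graph_def)

lemma num_edges_le_ex_x: "G \<in> GG n l t s x \<Longrightarrow> num_edges G \<le> ex_x n l t s x"
  unfolding ex_x_def using finite_GG by (intro le_cSup_finite) auto

lemma ex_x_le:
  assumes "\<And>G. G \<in> GG n l t s x \<Longrightarrow> num_edges G \<le> b"
  shows "ex_x n l t s x \<le> b"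
proof (cases "GG n l t s x = {}")
  case False
  then show ?thesis
    unfolding ex_x_def using assms by (intro cSup_least) auto
qed (simp add: ex_x_def)

theorem lemma3p1:
  fixes l t s n x :: nat
  assumes "t \<ge> l" and "s \<ge> l + 1" and "l + 1 \<ge> 3"
    and "n \<ge> 2 * ((3 * s) choose 2)"
    and "1 \<le> x" and "x \<le> l - 1"
  shows "ex_x n l t s (l - 1) \<ge> ex_x n l t s x"
proof (cases "x = l - 1")
  case False
  define p where "p = l - 1"
  define k where "k = s - p"
  have l: "l = p + 1" and s: "s = p + k" and p: "2 \<le> p" "x < p" and "1 \<le> k"
    using assms False by (auto simp: p_def k_def)
  note n = extremal_graph_size_conditions[OF p(1) \<open>1 \<le> k\<close> s assms(4)]
  have "ex_x n l t s x \<le> num_edges (extremal_graph n p k)"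
    using num_edges_le_extremal_graph[OF _ p(2) s n(2)] by (rule ex_x_le)
  also have "\<dots> \<le> ex_x n l t s (l - 1)"
    using extremal_graph_in_GG[OF p(1) _ n(1), of t] assms(1) unfolding l s
    by (intro num_edges_le_ex_x) simp
  finally show ?thesis .
qed simp

end
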